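(* Let $m\ge1$ and for $p_1,\dots,p_m\ge0$ let $K_{p_1,\dots,p_m}$ be the complete $m$-partite graph whose vertex set is a disjoint union of parts of sizes $p_1,\dots,p_m$, with two vertices adjacent if and only if they lie in different parts. Then $$\sum_{p_1,\dots,p_m\ge0}\mathrm{sa}(K_{p_1,\dots,p_m})\,\frac{x_1^{p_1}}{p_1!}\cdots\frac{x_m^{p_m}}{p_m!} = \frac{(1-m)+\cosh x_1+\cdots+\cosh x_m}{\cosh(x_1+\cdots+x_m)}.$$
   Context: All graphs are finite, simple and undirected. For a graph $G=(V,E)$ and $V'\subseteq V$, $G|_{V'}$ denotes the induced subgraph on $V'$. The signed a-number $\mathrm{sa}(G)$ is defined recursively: $\mathrm{sa}(G)=1$ if $G$ is the empty graph (no vertices); $\mathrm{sa}(G)=0$ if $G$ has a connected component with an odd number of vertices; otherwise $\mathrm{sa}(G)=-\sum_{V'\subsetneq V}\mathrm{sa}(G|_{V'})$. *)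

theory Defs
  imports "HOL-Analysis.Analysis"
begin

text \<open>A finite simple graph is given by a vertex set V and a (symmetric, irreflexive)
adjacency relation E.  The induced subgraph on V' \<subseteq> V is represented by (E, V'):
all notions below only use edges between vertices of the given vertex set.\<close>

definition adj_in :: "('a \<Rightarrow> 'a \<Rightarrow> bool) \<Rightarrow> 'a set \<Rightarrow> 'a \<Rightarrow> 'a \<Rightarrow> bool" where
  "adj_in E V x y \<longleftrightarrow> x \<in> V \<and> y \<in> V \<and> E x y"

definition component :: "('a \<Rightarrow> 'a \<Rightarrow> bool) \<Rightarrow> 'a set \<Rightarrow> 'a \<Rightarrow> 'a set" where
  "component E V v = {u \<in> V. (adj_in E V)\<^sup>*\<^sup>* v u}"

definition has_odd_component :: "('a \<Rightarrow> 'a \<Rightarrow> bool) \<Rightarrow> 'a set \<Rightarrow> bool" where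
  "has_odd_component E V \<longleftrightarrow> (\<exists>v\<in>V. odd (card (component E V v)))"

text \<open>Signed a-number; the value on infinite vertex sets is irrelevant (set to 0).\<close>
function sa :: "('a \<Rightarrow> 'a \<Rightarrow> bool) \<Rightarrow> 'a set \<Rightarrow> int" where
  "sa E V = (if \<not> finite V then 0
             else if V = {} then 1
             else if has_odd_component E V then 0
             else - (\<Sum>V'\<in>{V'. V' \<subset> V}. sa E V'))"
  by pat_completeness auto
termination
  by (relation "Wellfounded.measure (\<lambda>(E, V). card V)") (auto intro: psubset_card_mono)

text \<open>Complete m-partite graph K_{p_0,...,p_{m-1}}: vertex (i, j) is the j-th vertex of part i.\<close>
definition multipartite_verts :: "nat \<Rightarrow> (nat \<Rightarrow> nat) \<Rightarrow> (nat \<times> nat) set" where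
  "multipartite_verts m p = {(i, j). i < m \<and> j < p i}"

definition multipartite_adj :: "nat \<times> nat \<Rightarrow> nat \<times> nat \<Rightarrow> bool" where
  "multipartite_adj a b \<longleftrightarrow> fst a \<noteq> fst b"

end

theory Submission
  imports Defs "HOL-Library.Function_Algebras"
begin

text \<open>
  If at least two parts of \<open>K\<^sub>r\<close> are nonempty, the graph is connected, so
  \<open>sa(K\<^sub>r) = 0\<close> for odd \<open>|r|\<close>, while for even \<open>|r|\<close> the defining recursion
  applies. Induced subgraphs of \<open>K\<^sub>r\<close> are complete multipartite again, so the recursion
  reads \<open>\<Sum>\<^sub>p\<^sub>\<le>\<^sub>r binom(r,p) sa(K\<^sub>p) = 0\<close>. If at most one part is
  nonempty, \<open>K\<^sub>r\<close> is edgeless and \<open>sa(K\<^sub>r) = 0\<close> unless \<open>r = 0\<close>.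
  Since only even \<open>|p|\<close> contribute, multiplying the exponential generating function \<open>A(x)\<close>
  by \<open>cosh(x\<^sub>1 + \<dots> + x\<^sub>m)\<close> therefore leaves exactly the coefficients of
  \<open>1 - m + cosh x\<^sub>1 + \<dots> + cosh x\<^sub>m\<close>.
  The same recursion gives \<open>|sa(K\<^sub>r)| \<le> (2m)\<^bsup>|r|\<^esup> r!\<close>, so all series converge
  absolutely for \<open>|x\<^sub>i| < 1/(2m)\<close>, which justifies the Cauchy product.
\<close>

section \<open>Isomorphism invariance of the signed a-number\<close>

text \<open>Otherwise the simplifier unfolds \<open>sa\<close> again inside its own defining sum.\<close>
declare sa.simps [simp del]

lemma rtranclp_adj_in_image:
  assumes "(adj_in E V)\<^sup>*\<^sup>* v u" "f ` V \<subseteq> W"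
    and "\<And>x y. x \<in> V \<Longrightarrow> y \<in> V \<Longrightarrow> E x y \<Longrightarrow> E' (f x) (f y)"
  shows "(adj_in E' W)\<^sup>*\<^sup>* (f v) (f u)"
  using assms(1)
proof (induction rule: rtranclp_induct)
  case (step y z)
  then have "adj_in E' W (f y) (f z)" using assms(2,3) by (auto simp: adj_in_def)
  with step.IH show ?case by (rule rtranclp.rtrancl_into_rtrancl)
qed simp

lemma component_subset: "component E V v \<subseteq> V"
  by (auto simp: component_def)

lemma image_component_subset:
  assumes "f ` V \<subseteq> W" "\<And>x y. x \<in> V \<Longrightarrow> y \<in> V \<Longrightarrow> E x y \<Longrightarrow> E (f x) (f y)"
  shows "f ` component E V v \<subseteq> component E W (f v)"
proof
  fix u assume "u \<in> f ` component E V v"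
  then obtain w where "w \<in> V" "(adj_in E V)\<^sup>*\<^sup>* v w" "u = f w"
    by (auto simp: component_def)
  with rtranclp_adj_in_image[where E'=E, OF _ assms] assms(1)
  show "u \<in> component E W (f v)" by (auto simp: component_def)
qed

lemma component_bij_betw:
  assumes f: "bij_betw f V W" and E: "\<And>x y. x \<in> V \<Longrightarrow> y \<in> V \<Longrightarrow> E (f x) (f y) = E x y"
    and "v \<in> V"
  shows "component E W (f v) = f ` component E V v"
proof
  show "f ` component E V v \<subseteq> component E W (f v)"
    using f E by (intro image_component_subset) (auto simp: bij_betw_def)
  let ?g = "inv_into V f"
  have g: "bij_betw ?g W V" using f by (rule bij_betw_inv_into)
  have fg: "f (?g y) = y" if "y \<in> W" for y using f that by (simp add: bij_betw_inv_into_right)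
  have "?g ` component E W (f v) \<subseteq> component E V (?g (f v))"
  proof (rule image_component_subset)
    show "?g ` W \<subseteq> V" using g by (simp add: bij_betw_def)
    show "E (?g x) (?g y)" if "x \<in> W" "y \<in> W" "E x y" for x y
      using that E[of "?g x" "?g y"] fg g by (auto simp: bij_betw_def)
  qed
  then have "f ` ?g ` component E W (f v) \<subseteq> f ` component E V v"
    using f \<open>v \<in> V\<close> by (simp add: bij_betw_inv_into_left image_mono)
  moreover have "f ` ?g ` component E W (f v) = component E W (f v)"
    using fg component_subset[of E W] by (force simp: image_image)
  ultimately show "component E W (f v) \<subseteq> f ` component E V v" by simp
qed

lemma has_odd_component_bij_betw:
  assumes f: "bij_betw f V W" and E: "\<And>x y. x \<in> V \<Longrightarrow> y \<in> V \<Longrightarrow> E (f x) (f y) = E x y"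
  shows "has_odd_component E W \<longleftrightarrow> has_odd_component E V"
proof -
  have "card (component E W (f v)) = card (component E V v)" if "v \<in> V" for v
  proof -
    have "inj_on f (component E V v)"
      using f component_subset by (metis bij_betw_def inj_on_subset)
    then show ?thesis using component_bij_betw[OF f, of E, OF E that] by (simp add: card_image)
  qed
  moreover have "W = f ` V" using f by (simp add: bij_betw_def)
  ultimately show ?thesis by (auto simp: has_odd_component_def)
qed

lemma sa_bij_betw:
  assumes "bij_betw f V W" "\<And>x y. x \<in> V \<Longrightarrow> y \<in> V \<Longrightarrow> E (f x) (f y) = E x y"
  shows "sa E W = sa E V"
  using assms
proof (induction "card V" arbitrary: V W rule: less_induct)
  case less
  note f = less.prems(1) and E = less.prems(2)
  have finite_iff: "finite W \<longleftrightarrow> finite V" using f by (rule bij_betw_finite[symmetric])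
  have W: "W = f ` V" using f by (simp add: bij_betw_def)
  show ?case
  proof (cases "finite V")
    case fin: True
    have "bij_betw (image f) (Pow V - {V}) (Pow W - {W})"
      using bij_betw_image_Pow[OF f] W by (intro bij_betw_DiffI) (auto simp: bij_betw_def)
    moreover have "sa E (f ` V') = sa E V'" if "V' \<in> Pow V - {V}" for V'
    proof (rule less.hyps)
      show "card V' < card V" using that fin by (auto intro: psubset_card_mono)
      show "bij_betw f V' (f ` V')"
        using that f by (auto simp: bij_betw_def intro: inj_on_subset)
    qed (use that E in auto)
    ultimately have "(\<Sum>V'\<in>Pow V - {V}. sa E V') = (\<Sum>W'\<in>Pow W - {W}. sa E W')"
      by (metis (no_types, lifting) sum.cong sum.reindex_bij_betw)
    moreover have "{V'. V' \<subset> V} = Pow V - {V}" "{W'. W' \<subset> W} = Pow W - {W}" by auto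
    ultimately show ?thesis
      using fin finite_iff has_odd_component_bij_betw[OF f, of E, OF E] W by (subst (1 2) sa.simps) simp
  qed (subst (1 2) sa.simps, simp add: finite_iff)
qed

lemma sa_empty: "sa E {} = 1"
  by (subst sa.simps) simp

lemma sa_has_odd_component: "finite V \<Longrightarrow> has_odd_component E V \<Longrightarrow> sa E V = 0"
  by (subst sa.simps) (auto simp: has_odd_component_def)

lemma sum_sa_Pow:
  assumes "finite V" "V \<noteq> {}" "\<not> has_odd_component E V"
  shows "(\<Sum>V'\<in>Pow V. sa E V') = 0"
proof -
  have fin: "finite {V'. V' \<subset> V}"
    by (rule finite_subset[of _ "Pow V"]) (use assms(1) in auto)
  have "Pow V = insert V {V'. V' \<subset> V}" by auto
  then have "(\<Sum>V'\<in>Pow V. sa E V') = sa E V + (\<Sum>V'\<in>{V'. V' \<subset> V}. sa E V')"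
    using fin by simp
  also have "sa E V = - (\<Sum>V'\<in>{V'. V' \<subset> V}. sa E V')"
    using assms by (subst sa.simps) simp
  finally show ?thesis by simp
qed

section \<open>Complete multipartite graphs\<close>

definition part_size :: "(nat \<times> nat) set \<Rightarrow> nat \<Rightarrow> nat" where
  "part_size S i = card {j. (i, j) \<in> S}"

definition sa_multipartite :: "nat \<Rightarrow> (nat \<Rightarrow> nat) \<Rightarrow> int" where
  "sa_multipartite m p = sa multipartite_adj (multipartite_verts m p)"

lemma multipartite_verts_Sigma: "multipartite_verts m r = Sigma {..<m} (\<lambda>i. {..<r i})"
  by (auto simp: multipartite_verts_def)

lemma finite_multipartite_verts: "finite (multipartite_verts m r)"
  by (simp add: multipartite_verts_Sigma)

lemma bij_betw_Sigma_fibers: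
  assumes "\<And>i. i \<in> I \<Longrightarrow> bij_betw (h i) (A i) (B i)"
  shows "bij_betw (\<lambda>(i, j). (i, h i j)) (Sigma I A) (Sigma I B)"
proof -
  have "(\<lambda>(i, j). (i, h i j)) ` Sigma I A = Sigma I B"
  proof
    show "(\<lambda>(i, j). (i, h i j)) ` Sigma I A \<subseteq> Sigma I B"
      using assms by (auto dest: bij_betwE)
    show "Sigma I B \<subseteq> (\<lambda>(i, j). (i, h i j)) ` Sigma I A"
    proof clarify
      fix i b assume "i \<in> I" "b \<in> B i"
      then obtain a where "a \<in> A i" "b = h i a" using assms by (metis bij_betw_iff_bijections)
      with \<open>i \<in> I\<close> show "(i, b) \<in> (\<lambda>(i, j). (i, h i j)) ` Sigma I A" by force
    qed
  qed
  moreover have "inj_on (\<lambda>(i, j). (i, h i j)) (Sigma I A)"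
    using assms by (auto simp: inj_on_def bij_betw_def)
  ultimately show ?thesis by (simp add: bij_betw_def)
qed

lemma sa_multipartite_part_size:
  assumes "finite S" "\<And>x. x \<in> S \<Longrightarrow> fst x < m"
  shows "sa multipartite_adj S = sa_multipartite m (part_size S)"
proof -
  define A where "A i = {j. (i, j) \<in> S}" for i
  have fin: "finite (A i)" for i
    by (rule finite_subset[of _ "snd ` S"]) (use assms(1) in \<open>force simp: A_def\<close>)+
  then have "\<forall>i. \<exists>h. bij_betw h (A i) {..<card (A i)}"
    using ex_bij_betw_finite_nat by (metis atLeast0LessThan)
  then obtain h where h: "\<And>i. bij_betw (h i) (A i) {..<card (A i)}" by metis
  have "S = Sigma {..<m} A" using assms(2) by (force simp: A_def)
  moreover have "multipartite_verts m (part_size S) = Sigma {..<m} (\<lambda>i. {..<card (A i)})"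
    by (simp add: multipartite_verts_Sigma part_size_def A_def)
  ultimately have "bij_betw (\<lambda>(i, j). (i, h i j)) S (multipartite_verts m (part_size S))"
    using h by (simp add: bij_betw_Sigma_fibers)
  then show ?thesis
    unfolding sa_multipartite_def by (rule sa_bij_betw[symmetric]) (auto simp: multipartite_adj_def)
qed

definition multi_indices :: "nat \<Rightarrow> (nat \<Rightarrow> nat) set" where
  "multi_indices m = {p. \<forall>i\<ge>m. p i = 0}"

definition total_size :: "nat \<Rightarrow> (nat \<Rightarrow> nat) \<Rightarrow> nat" where
  "total_size m p = (\<Sum>i<m. p i)"

definition binomial_vec :: "nat \<Rightarrow> (nat \<Rightarrow> nat) \<Rightarrow> (nat \<Rightarrow> nat) \<Rightarrow> nat" where
  "binomial_vec m r p = (\<Prod>i<m. r i choose p i)"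

lemma atMost_subset_multi_indices: "r \<in> multi_indices m \<Longrightarrow> {..r} \<subseteq> multi_indices m"
  by (auto simp: multi_indices_def le_fun_def) (metis le_zero_eq)

lemma finite_atMost_multi_indices:
  assumes "r \<in> multi_indices m"
  shows "finite {..r}"
proof -
  let ?F = "{p. \<forall>i. (i \<in> {..<m} \<longrightarrow> p i \<in> {..total_size m r}) \<and> (i \<notin> {..<m} \<longrightarrow> p i = 0)}"
  have "p i \<le> total_size m r" if "p \<le> r" "i < m" for p i
    using that member_le_sum[of i "{..<m}" r] by (auto simp: le_fun_def total_size_def intro: order.trans)
  then have "{..r} \<subseteq> ?F"
    using assms by (auto simp: multi_indices_def le_fun_def) (metis le_zero_eq not_le)
  moreover have "finite ?F" by (rule finite_set_of_finite_funs) auto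
  ultimately show ?thesis by (rule finite_subset)
qed

lemma total_size_eq_0_iff:
  assumes "p \<in> multi_indices m"
  shows "total_size m p = 0 \<longleftrightarrow> p = 0"
proof -
  have "total_size m p = 0 \<longleftrightarrow> (\<forall>i<m. p i = 0)" by (auto simp: total_size_def)
  also have "\<dots> \<longleftrightarrow> p = 0" using assms by (auto simp: multi_indices_def fun_eq_iff) (meson not_le)
  finally show ?thesis .
qed

lemma part_size_le:
  assumes "V' \<subseteq> multipartite_verts m r"
  shows "part_size V' \<le> r"
proof (rule le_funI)
  fix i
  have "{j. (i, j) \<in> V'} \<subseteq> {..<r i}" using assms by (auto simp: multipartite_verts_def)
  then show "part_size V' i \<le> r i"
    unfolding part_size_def by (metis card_lessThan card_mono finite_lessThan)
qed

lemma card_part_size_fiber: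
  assumes r: "r \<in> multi_indices m" and "p \<le> r"
  shows "card {V' \<in> Pow (multipartite_verts m r). part_size V' = p} = binomial_vec m r p"
proof -
  define F where "F = {V' \<in> Pow (multipartite_verts m r). part_size V' = p}"
  define T where "T = PiE {..<m} (\<lambda>i. {A. A \<subseteq> {..<r i} \<and> card A = p i})"
  have p0: "p i = 0" if "i \<ge> m" for i
    using atMost_subset_multi_indices[OF r] \<open>p \<le> r\<close> that by (auto simp: multi_indices_def)
  have "bij_betw (\<lambda>V'. restrict (\<lambda>i. {j. (i, j) \<in> V'}) {..<m}) F T"
  proof (rule bij_betw_byWitness[where f'="\<lambda>U. {(i, j). i < m \<and> j \<in> U i}"])
    show "\<forall>V'\<in>F. {(i, j). i < m \<and> j \<in> restrict (\<lambda>i. {j. (i, j) \<in> V'}) {..<m} i} = V'"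
      by (auto simp: F_def multipartite_verts_def)
    show "\<forall>U\<in>T. restrict (\<lambda>i. {j. (i, j) \<in> {(i, j). i < m \<and> j \<in> U i}}) {..<m} = U"
      by (auto simp: T_def PiE_def extensional_def fun_eq_iff)
    show "(\<lambda>V'. restrict (\<lambda>i. {j. (i, j) \<in> V'}) {..<m}) ` F \<subseteq> T"
      by (auto simp: F_def T_def multipartite_verts_def part_size_def)
    show "(\<lambda>U. {(i, j). i < m \<and> j \<in> U i}) ` T \<subseteq> F"
    proof clarify
      fix U assume U: "U \<in> T"
      have "part_size {(i, j). i < m \<and> j \<in> U i} i = p i" for i
        using U p0[of i] by (cases "i < m") (auto simp: T_def part_size_def)
      moreover have "{(i, j). i < m \<and> j \<in> U i} \<subseteq> multipartite_verts m r"
        using U by (force simp: T_def multipartite_verts_def PiE_def Pi_def)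
      ultimately show "{(i, j). i < m \<and> j \<in> U i} \<in> F" by (auto simp: F_def)
    qed
  qed
  then have "card F = card T" by (rule bij_betw_same_card)
  also have "\<dots> = binomial_vec m r p"
    by (simp add: T_def card_PiE binomial_vec_def n_subsets)
  finally show ?thesis by (simp add: F_def)
qed

lemma sum_Pow_multipartite_verts:
  fixes g :: "(nat \<Rightarrow> nat) \<Rightarrow> 'a::comm_semiring_1"
  assumes r: "r \<in> multi_indices m"
  shows "(\<Sum>V'\<in>Pow (multipartite_verts m r). g (part_size V'))
    = (\<Sum>p\<le>r. of_nat (binomial_vec m r p) * g p)"
proof -
  have "(\<Sum>V'\<in>Pow (multipartite_verts m r). g (part_size V'))
      = (\<Sum>p\<le>r. \<Sum>V'\<in>{V' \<in> Pow (multipartite_verts m r). part_size V' = p}. g (part_size V'))"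
    by (rule sum.group[symmetric])
      (auto simp: finite_atMost_multi_indices[OF r] finite_multipartite_verts part_size_le)
  also have "\<dots> = (\<Sum>p\<le>r. of_nat (binomial_vec m r p) * g p)"
    using card_part_size_fiber[OF r] by (intro sum.cong) auto
  finally show ?thesis .
qed

definition has_two_parts :: "nat \<Rightarrow> (nat \<Rightarrow> nat) \<Rightarrow> bool" where
  "has_two_parts m r \<longleftrightarrow> (\<exists>i<m. \<exists>k<m. i \<noteq> k \<and> 0 < r i \<and> 0 < r k)"

lemma card_multipartite_verts: "card (multipartite_verts m r) = total_size m r"
  by (simp add: multipartite_verts_Sigma total_size_def card_SigmaI)

lemma multipartite_verts_eq_empty_iff: "multipartite_verts m r = {} \<longleftrightarrow> total_size m r = 0"
  by (metis card_0_eq card_multipartite_verts finite_multipartite_verts)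

lemma component_multipartite_two_parts:
  assumes "has_two_parts m r" "v \<in> multipartite_verts m r"
  shows "component multipartite_adj (multipartite_verts m r) v = multipartite_verts m r"
proof -
  let ?V = "multipartite_verts m r"
  have "(adj_in multipartite_adj ?V)\<^sup>*\<^sup>* v u" if u: "u \<in> ?V" for u
  proof (cases "fst v = fst u")
    case False
    then show ?thesis using assms(2) u by (intro r_into_rtranclp) (simp add: adj_in_def multipartite_adj_def)
  next
    case True
    obtain k where k: "k < m" "k \<noteq> fst v" "0 < r k" using assms(1) unfolding has_two_parts_def by metis
    then have "(k, 0) \<in> ?V" by (simp add: multipartite_verts_def)
    then have "adj_in multipartite_adj ?V v (k, 0)" "adj_in multipartite_adj ?V (k, 0) u"
      using assms(2) u k True by (auto simp: adj_in_def multipartite_adj_def)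
    then show ?thesis by (meson rtranclp.rtrancl_into_rtrancl r_into_rtranclp)
  qed
  then show ?thesis by (auto simp: component_def)
qed

lemma component_multipartite_one_part:
  assumes "\<not> has_two_parts m r" "v \<in> multipartite_verts m r"
  shows "component multipartite_adj (multipartite_verts m r) v = {v}"
proof -
  let ?V = "multipartite_verts m r"
  have no_adj: "\<not> adj_in multipartite_adj ?V v y" for y
    using assms unfolding has_two_parts_def multipartite_verts_def adj_in_def multipartite_adj_def
    by auto (metis less_nat_zero_code)
  have "u = v" if "(adj_in multipartite_adj ?V)\<^sup>*\<^sup>* v u" for u
    using that by (rule converse_rtranclpE) (use no_adj in auto)
  then show ?thesis using assms(2) by (auto simp: component_def)
qed

lemma sa_multipartite_empty: "total_size m r = 0 \<Longrightarrow> sa_multipartite m r = 1"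
  by (simp add: sa_multipartite_def multipartite_verts_eq_empty_iff[symmetric] sa_empty)

lemma sa_multipartite_one_part:
  assumes "total_size m r \<noteq> 0" "\<not> has_two_parts m r"
  shows "sa_multipartite m r = 0"
proof -
  obtain v where v: "v \<in> multipartite_verts m r"
    using assms(1) by (metis ex_in_conv multipartite_verts_eq_empty_iff)
  then have "has_odd_component multipartite_adj (multipartite_verts m r)"
    using v component_multipartite_one_part[OF assms(2) v] unfolding has_odd_component_def by (intro bexI[of _ v]) auto
  then show ?thesis using v finite_multipartite_verts by (simp add: sa_multipartite_def sa_has_odd_component)
qed

lemma sa_multipartite_odd:
  assumes "odd (total_size m r)"
  shows "sa_multipartite m r = 0"
proof -
  have nonempty: "total_size m r \<noteq> 0" using assms by (metis dvd_0_right)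
  show ?thesis
  proof (cases "has_two_parts m r")
    case True
    obtain v where v: "v \<in> multipartite_verts m r"
      using nonempty by (metis ex_in_conv multipartite_verts_eq_empty_iff)
    then have "has_odd_component multipartite_adj (multipartite_verts m r)"
      using v component_multipartite_two_parts[OF True v] card_multipartite_verts[of m r] assms
      unfolding has_odd_component_def by (intro bexI[of _ v]) simp_all
    then show ?thesis using v finite_multipartite_verts by (simp add: sa_multipartite_def sa_has_odd_component)
  qed (use nonempty sa_multipartite_one_part in blast)
qed

lemma sum_sa_multipartite_two_parts:
  assumes r: "r \<in> multi_indices m" and "has_two_parts m r" "even (total_size m r)"
  shows "(\<Sum>p\<le>r. of_nat (binomial_vec m r p) * sa_multipartite m p) = 0"
proof -
  let ?V = "multipartite_verts m r"
  have "\<not> has_odd_component multipartite_adj ?V"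
    using component_multipartite_two_parts[OF assms(2)] assms(3) card_multipartite_verts
    by (auto simp: has_odd_component_def)
  moreover have "?V \<noteq> {}"
    using assms(2) by (auto simp: has_two_parts_def multipartite_verts_def)
  ultimately have "(\<Sum>V'\<in>Pow ?V. sa multipartite_adj V') = 0"
    using finite_multipartite_verts by (intro sum_sa_Pow)
  moreover have "sa multipartite_adj V' = sa_multipartite m (part_size V')" if "V' \<subseteq> ?V" for V'
    using that finite_multipartite_verts
    by (intro sa_multipartite_part_size) (auto simp: multipartite_verts_def intro: finite_subset)
  ultimately show ?thesis using sum_Pow_multipartite_verts[OF r, of "sa_multipartite m"] by simp
qed

lemma sum_sa_multipartite_one_part:
  assumes r: "r \<in> multi_indices m" and "\<not> has_two_parts m r"
  shows "(\<Sum>p\<le>r. of_nat (binomial_vec m r p) * sa_multipartite m p) = 1"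
proof -
  have "of_nat (binomial_vec m r p) * sa_multipartite m p = (if p = 0 then 1 else 0)"
    if "p \<le> r" for p
  proof -
    have "\<not> has_two_parts m p"
      using assms(2) that unfolding has_two_parts_def le_fun_def by (meson order.strict_trans2)
    moreover have "p \<in> multi_indices m" using atMost_subset_multi_indices[OF r] that by auto
    ultimately show ?thesis
      by (auto simp: total_size_eq_0_iff binomial_vec_def sa_multipartite_empty sa_multipartite_one_part)
  qed
  then show ?thesis
    using finite_atMost_multi_indices[OF r] by (simp add: sum.delta)
qed

section \<open>Growth of the signed a-numbers\<close>

definition fact_vec :: "nat \<Rightarrow> (nat \<Rightarrow> nat) \<Rightarrow> real" where
  "fact_vec m p = (\<Prod>i<m. fact (p i))"

lemma binomial_vec_self: "binomial_vec m r r = 1"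
  by (simp add: binomial_vec_def)

lemma binomial_vec_eq:
  "p \<le> r \<Longrightarrow> real (binomial_vec m r p) = fact_vec m r / (fact_vec m p * fact_vec m (r - p))"
  by (simp add: binomial_vec_def fact_vec_def binomial_fact le_fun_def prod_dividef prod.distrib)

lemma fact_vec_pos: "0 < fact_vec m p"
  by (simp add: fact_vec_def prod_pos)

lemma binomial_vec_fact_vec_le:
  assumes "p \<le> r"
  shows "real (binomial_vec m r p) * fact_vec m p \<le> fact_vec m r"
proof -
  have "1 \<le> fact_vec m (r - p)" by (simp add: fact_vec_def prod_ge_1)
  then have "fact_vec m r / fact_vec m (r - p) \<le> fact_vec m r"
    using fact_vec_pos[of m r] by (simp add: divide_le_eq mult_le_cancel_left1)
  then show ?thesis
    using binomial_vec_eq[OF assms] fact_vec_pos[of m p] by simp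
qed

lemma total_size_diff: "p \<le> r \<Longrightarrow> total_size m (r - p) = total_size m r - total_size m p"
  unfolding total_size_def by (simp add: le_fun_def sum_subtractf_nat)

lemma total_size_mono: "p \<le> r \<Longrightarrow> total_size m p \<le> total_size m r"
  unfolding total_size_def by (simp add: le_fun_def sum_mono)

lemma total_size_strict_mono:
  assumes "r \<in> multi_indices m" "p \<le> r" "p \<noteq> r"
  shows "total_size m p < total_size m r"
proof -
  obtain i where "p i \<noteq> r i" using assms(3) by (auto simp: fun_eq_iff)
  with assms(2) have lt: "p i < r i" by (simp add: le_fun_def le_neq_implies_less)
  have "i < m"
  proof (rule ccontr)
    assume "\<not> i < m"
    then have "r i = 0" using assms(1) by (simp add: multi_indices_def)
    with lt show False by simp
  qed
  then show ?thesis
    unfolding total_size_def using lt assms(2)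
    by (intro sum_strict_mono_ex1) (auto simp: le_fun_def)
qed

lemma sum_atMost_reflect:
  fixes r :: "'a \<Rightarrow> nat"
  shows "(\<Sum>p\<le>r. h (r - p)) = (\<Sum>q\<le>r. h q)"
  by (rule sum.reindex_bij_witness[where i="\<lambda>q. r - q" and j="\<lambda>p. r - p"])
    (auto simp: le_fun_def fun_eq_iff)

lemma has_sum_prod_multi_indices:
  fixes f :: "nat \<Rightarrow> nat \<Rightarrow> real"
  assumes "\<And>i. i < m \<Longrightarrow> (\<lambda>k. norm (f i k)) summable_on UNIV"
  shows "((\<lambda>p. \<Prod>i<m. f i (p i)) has_sum (\<Prod>i<m. infsum (f i) UNIV)) (multi_indices m)"
    and "(\<lambda>p. norm (\<Prod>i<m. f i (p i))) summable_on multi_indices m"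
proof -
  let ?B = "PiE {..<m} (\<lambda>_. UNIV :: nat set)"
  have bij: "bij_betw (\<lambda>u i. if i < m then u i else 0) ?B (multi_indices m)"
  proof (rule bij_betw_byWitness[where f'="\<lambda>p. restrict p {..<m}"])
    show "\<forall>u\<in>?B. restrict (\<lambda>i. if i < m then u i else 0) {..<m} = u"
      by (auto simp: PiE_def extensional_def fun_eq_iff)
    show "\<forall>p\<in>multi_indices m. (\<lambda>i. if i < m then restrict p {..<m} i else 0) = p"
      by (auto simp: multi_indices_def fun_eq_iff)
    show "(\<lambda>u i. if i < m then u i else 0) ` ?B \<subseteq> multi_indices m"
      by (simp add: image_subset_iff multi_indices_def)
    show "(\<lambda>p. restrict p {..<m}) ` multi_indices m \<subseteq> ?B"
      by (simp add: image_subset_iff)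
  qed
  have extend: "(\<Prod>i<m. f i (if i < m then u i else 0)) = (\<Prod>i<m. f i (u i))" for u
    by (rule prod.cong) auto
  have "Infinite_Set_Sum.abs_summable_on (\<lambda>u. \<Prod>i<m. f i (u i)) ?B"
    using assms by (intro abs_summable_on_prod_PiE) (auto simp flip: abs_summable_equivalent)
  then have norm_summable: "(\<lambda>u. norm (\<Prod>i<m. f i (u i))) summable_on ?B"
    by (rule iffD2[OF abs_summable_equivalent])
  then have "(\<lambda>u. \<Prod>i<m. f i (u i)) summable_on ?B"
    by (rule summable_on_iff_abs_summable_on_real[THEN iffD2])
  moreover have "infsum (\<lambda>u. \<Prod>i<m. f i (u i)) ?B = (\<Prod>i<m. infsum (f i) UNIV)"
    using assms by (intro infsum_prod_PiE_abs) auto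
  ultimately have "((\<lambda>u. \<Prod>i<m. f i (u i)) has_sum (\<Prod>i<m. infsum (f i) UNIV)) ?B"
    by (metis has_sum_infsum)
  then show "((\<lambda>p. \<Prod>i<m. f i (p i)) has_sum (\<Prod>i<m. infsum (f i) UNIV)) (multi_indices m)"
    by (simp add: has_sum_reindex_bij_betw[OF bij, symmetric] extend)
  show "(\<lambda>p. norm (\<Prod>i<m. f i (p i))) summable_on multi_indices m"
    using norm_summable by (simp add: summable_on_reindex_bij_betw[OF bij, symmetric] extend)
qed

lemma has_sum_geometric:
  fixes w :: real
  assumes "\<bar>w\<bar> < 1"
  shows "((\<lambda>k. w ^ k) has_sum 1 / (1 - w)) UNIV"
  using assms by (intro norm_summable_imp_has_sum geometric_sums)
    (simp_all add: summable_geometric power_abs)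

lemma sum_atMost_power_total_size_le:
  fixes w :: real
  assumes "0 \<le> w" "w < 1" "r \<in> multi_indices m"
  shows "(\<Sum>q\<le>r. w ^ total_size m q) \<le> (1 / (1 - w)) ^ m"
proof -
  have geometric: "((\<lambda>k. w ^ k) has_sum 1 / (1 - w)) UNIV"
    using assms by (intro has_sum_geometric) auto
  then have "(\<lambda>k. norm (w ^ k)) summable_on UNIV"
    using assms(1) by (simp add: has_sum_imp_summable)
  then have "((\<lambda>q. \<Prod>i<m. w ^ q i) has_sum (\<Prod>i<m. infsum (\<lambda>k. w ^ k) UNIV)) (multi_indices m)"
    by (intro has_sum_prod_multi_indices)
  then have series: "((\<lambda>q. w ^ total_size m q) has_sum (1 / (1 - w)) ^ m) (multi_indices m)"
    using geometric by (simp add: total_size_def power_sum infsumI)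
  then have "(\<Sum>q\<le>r. w ^ total_size m q) \<le> infsum (\<lambda>q. w ^ total_size m q) (multi_indices m)"
    using assms atMost_subset_multi_indices finite_atMost_multi_indices
    by (intro finite_sum_le_infsum) (auto dest: has_sum_imp_summable)
  also have "\<dots> = (1 / (1 - w)) ^ m"
    using series by (rule infsumI)
  finally show ?thesis .
qed

lemma power_one_div_one_minus_le_two:
  assumes "m \<ge> 1"
  shows "(1 / (1 - 1 / (2 * real m))) ^ m \<le> 2"
proof -
  have "1 / 2 = 1 + real m * (- 1 / (2 * real m))" using assms by simp
  also have "\<dots> \<le> (1 - 1 / (2 * real m)) ^ m"
    using Bernoulli_inequality[of "- 1 / (2 * real m)" m] assms by (simp add: field_simps)
  finally have "1 / 2 \<le> (1 - 1 / (2 * real m)) ^ m" .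
  then show ?thesis by (simp add: power_one_over divide_le_eq)
qed

lemma sum_below_power_total_size_le:
  assumes "m \<ge> 1" "r \<in> multi_indices m"
  shows "(\<Sum>p\<in>{..r} - {r}. (2 * real m) ^ total_size m p) \<le> (2 * real m) ^ total_size m r"
proof -
  define M where "M = 2 * real m"
  have M: "M \<ge> 2" using assms(1) by (simp add: M_def)
  have "(\<Sum>p\<le>r. (1 / M) ^ (total_size m r - total_size m p)) = (\<Sum>p\<le>r. (1 / M) ^ total_size m (r - p))"
    by (intro sum.cong) (simp_all add: total_size_diff)
  also have "\<dots> = (\<Sum>q\<le>r. (1 / M) ^ total_size m q)"
    by (rule sum_atMost_reflect)
  also have "\<dots> \<le> (1 / (1 - 1 / M)) ^ m"
    using assms M by (intro sum_atMost_power_total_size_le) auto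
  also have "\<dots> \<le> 2"
    using power_one_div_one_minus_le_two[OF assms(1)] by (simp add: M_def)
  finally have "(\<Sum>p\<le>r. (1 / M) ^ (total_size m r - total_size m p)) \<le> 2" .
  moreover have "(\<Sum>p\<le>r. (1 / M) ^ (total_size m r - total_size m p))
      = 1 + (\<Sum>p\<in>{..r} - {r}. (1 / M) ^ (total_size m r - total_size m p))"
    using finite_atMost_multi_indices[OF assms(2)] by (subst sum.remove[where x=r]) auto
  ultimately have le_1: "(\<Sum>p\<in>{..r} - {r}. (1 / M) ^ (total_size m r - total_size m p)) \<le> 1"
    by simp
  have reweight: "M ^ total_size m p = M ^ total_size m r * (1 / M) ^ (total_size m r - total_size m p)"
    if "p \<le> r" for p
  proof -
    have "M ^ total_size m r = M ^ total_size m p * M ^ (total_size m r - total_size m p)"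
      using total_size_mono[OF that, of m] by (simp flip: power_add)
    then show ?thesis using M by (simp add: power_one_over)
  qed
  have "(\<Sum>p\<in>{..r} - {r}. M ^ total_size m p)
      = M ^ total_size m r * (\<Sum>p\<in>{..r} - {r}. (1 / M) ^ (total_size m r - total_size m p))"
    unfolding sum_distrib_left by (rule sum.cong[OF refl], rule reweight) auto
  also have "\<dots> \<le> M ^ total_size m r"
    using le_1 M by (intro mult_left_le) auto
  finally show ?thesis by (simp add: M_def)
qed

lemma sa_multipartite_recursion:
  assumes "r \<in> multi_indices m" "has_two_parts m r" "even (total_size m r)"
  shows "real_of_int (sa_multipartite m r)
    = - (\<Sum>p\<in>{..r} - {r}. real (binomial_vec m r p) * real_of_int (sa_multipartite m p))"
proof -
  have "(\<Sum>p\<le>r. of_nat (binomial_vec m r p) * sa_multipartite m p)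
      = sa_multipartite m r + (\<Sum>p\<in>{..r} - {r}. of_nat (binomial_vec m r p) * sa_multipartite m p)"
    using finite_atMost_multi_indices[OF assms(1)]
    by (subst sum.remove[where x=r]) (auto simp: binomial_vec_self)
  then have "sa_multipartite m r
      = - (\<Sum>p\<in>{..r} - {r}. of_nat (binomial_vec m r p) * sa_multipartite m p)"
    using sum_sa_multipartite_two_parts[OF assms] by simp
  then show ?thesis by (simp add: of_int_sum)
qed

lemma abs_sa_multipartite_le:
  assumes "m \<ge> 1" "r \<in> multi_indices m"
  shows "\<bar>real_of_int (sa_multipartite m r)\<bar> \<le> (2 * real m) ^ total_size m r * fact_vec m r"
  using assms(2)
proof (induction "total_size m r" arbitrary: r rule: less_induct)
  case less
  define M where "M = 2 * real m"
  consider "total_size m r = 0" | "sa_multipartite m r = 0"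
    | "has_two_parts m r" "even (total_size m r)"
    using sa_multipartite_odd sa_multipartite_one_part by blast
  then show ?case
  proof cases
    case 1
    then have "r = 0" using less.prems by (simp add: total_size_eq_0_iff)
    with 1 show ?thesis by (simp add: sa_multipartite_empty fact_vec_def)
  next
    case 2
    then show ?thesis using fact_vec_pos[of m r] by simp
  next
    case 3
    have "\<bar>real_of_int (sa_multipartite m r)\<bar>
        \<le> (\<Sum>p\<in>{..r} - {r}. \<bar>real (binomial_vec m r p) * real_of_int (sa_multipartite m p)\<bar>)"
      unfolding sa_multipartite_recursion[OF less.prems 3] abs_minus_cancel by (rule sum_abs)
    also have "\<dots> \<le> (\<Sum>p\<in>{..r} - {r}. M ^ total_size m p * fact_vec m r)"
    proof (rule sum_mono)
      fix p assume p: "p \<in> {..r} - {r}"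
      then have "p \<in> multi_indices m" "total_size m p < total_size m r"
        using less.prems atMost_subset_multi_indices total_size_strict_mono by auto
      then have IH: "\<bar>real_of_int (sa_multipartite m p)\<bar> \<le> M ^ total_size m p * fact_vec m p"
        using less.hyps by (simp add: M_def)
      have "\<bar>real (binomial_vec m r p) * real_of_int (sa_multipartite m p)\<bar>
          \<le> real (binomial_vec m r p) * (M ^ total_size m p * fact_vec m p)"
        unfolding abs_mult abs_of_nat by (rule mult_left_mono[OF IH]) simp
      also have "\<dots> = M ^ total_size m p * (real (binomial_vec m r p) * fact_vec m p)"
        by (simp only: mult_ac)
      also have "\<dots> \<le> M ^ total_size m p * fact_vec m r"
        using p by (intro mult_left_mono[OF binomial_vec_fact_vec_le]) (auto simp: M_def)
      finally show "\<bar>real (binomial_vec m r p) * real_of_int (sa_multipartite m p)\<bar>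
          \<le> M ^ total_size m p * fact_vec m r" .
    qed
    also have "\<dots> = fact_vec m r * (\<Sum>p\<in>{..r} - {r}. M ^ total_size m p)"
      by (simp only: sum_distrib_left mult.commute)
    also have "\<dots> \<le> fact_vec m r * M ^ total_size m r"
      using sum_below_power_total_size_le[OF assms(1) less.prems] fact_vec_pos[of m r]
      by (simp add: M_def)
    finally show ?thesis by (simp add: M_def mult.commute)
  qed
qed

section \<open>Exponential generating functions\<close>

definition divided_power :: "nat \<Rightarrow> (nat \<Rightarrow> real) \<Rightarrow> (nat \<Rightarrow> nat) \<Rightarrow> real" where
  "divided_power m x p = (\<Prod>i<m. x i ^ p i / fact (p i))"

lemma divided_power_mult:
  assumes "p \<le> r"
  shows "divided_power m x p * divided_power m x (r - p)
    = real (binomial_vec m r p) * divided_power m x r"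
proof -
  have "x i ^ p i / fact (p i) * (x i ^ (r i - p i) / fact (r i - p i))
      = real (r i choose p i) * (x i ^ r i / fact (r i))" for i
  proof -
    have le: "p i \<le> r i" using assms by (simp add: le_fun_def)
    then have "x i ^ p i * x i ^ (r i - p i) = x i ^ r i" by (simp flip: power_add)
    then show ?thesis using le by (simp add: binomial_fact)
  qed
  then show ?thesis
    by (simp add: divided_power_def binomial_vec_def flip: prod.distrib)
qed

lemma has_sum_exp: "((\<lambda>k. y ^ k / fact k) has_sum exp y) UNIV"
  for y :: real
proof (rule norm_summable_imp_has_sum)
  show "summable (\<lambda>k. norm (y ^ k / fact k))"
    using summable_exp[of "\<bar>y\<bar>"] by (simp add: abs_mult power_abs divide_inverse mult.commute)
  show "(\<lambda>k. y ^ k / fact k) sums exp y"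
    using exp_converges[of y] by (simp add: divide_inverse scaleR_conv_of_real mult.commute)
qed

lemma summable_on_norm_exp: "(\<lambda>k. norm (y ^ k / fact k)) summable_on UNIV"
  for y :: real
  using has_sum_exp[of "\<bar>y\<bar>"] by (simp add: power_abs has_sum_imp_summable)

lemma has_sum_cosh: "((\<lambda>k. if even k then y ^ k / fact k else 0) has_sum cosh y) UNIV"
  for y :: real
proof -
  have "((\<lambda>k. (y ^ k / fact k + (- y) ^ k / fact k) / 2) has_sum (exp y + exp (- y)) / 2) UNIV"
    by (intro has_sum_divide_const has_sum_add has_sum_exp)
  moreover have "(y ^ k / fact k + (- y) ^ k / fact k) / 2 = (if even k then y ^ k / fact k else 0)"
    for k
    by (cases "even k") (simp_all add: power_minus_odd)
  ultimately show ?thesis by (simp add: cosh_def)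
qed

lemma divided_power_zero: "divided_power m x 0 = 1"
  by (simp add: divided_power_def)

lemma divided_power_uminus:
  "divided_power m (\<lambda>i. - x i) q = (-1) ^ total_size m q * divided_power m x q"
proof -
  have sign: "(- x i) ^ q i / fact (q i) = (-1) ^ q i * (x i ^ q i / fact (q i))" for i
    by (simp add: power_minus[of "x i"])
  have "divided_power m (\<lambda>i. - x i) q = (\<Prod>i<m. (-1) ^ q i * (x i ^ q i / fact (q i)))"
    unfolding divided_power_def by (rule prod.cong[OF refl sign])
  also have "\<dots> = (\<Prod>i<m. (-1) ^ q i) * divided_power m x q"
    unfolding divided_power_def by (rule prod.distrib)
  also have "(\<Prod>i<m. (-1::real) ^ q i) = (-1) ^ total_size m q"
    unfolding total_size_def by (rule power_sum[symmetric])
  finally show ?thesis .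
qed

lemma abs_divided_power: "\<bar>divided_power m x p\<bar> = (\<Prod>i<m. \<bar>x i\<bar> ^ p i) / fact_vec m p"
  by (simp add: divided_power_def fact_vec_def abs_prod prod_dividef power_abs)

lemma has_sum_divided_power:
  "(divided_power m x has_sum exp (\<Sum>i<m. x i)) (multi_indices m)"
  "(\<lambda>p. norm (divided_power m x p)) summable_on multi_indices m"
proof -
  have "((\<lambda>p. \<Prod>i<m. x i ^ p i / fact (p i))
      has_sum (\<Prod>i<m. infsum (\<lambda>k. x i ^ k / fact k) UNIV)) (multi_indices m)"
    by (rule has_sum_prod_multi_indices(1)) (rule summable_on_norm_exp)
  moreover have "infsum (\<lambda>k. x i ^ k / fact k) UNIV = exp (x i)" for i
    using has_sum_exp by (rule infsumI)
  ultimately show "(divided_power m x has_sum exp (\<Sum>i<m. x i)) (multi_indices m)"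
    by (simp add: divided_power_def[abs_def] exp_sum)
  show "(\<lambda>p. norm (divided_power m x p)) summable_on multi_indices m"
    unfolding divided_power_def
    by (rule has_sum_prod_multi_indices(2)) (rule summable_on_norm_exp)
qed

definition cosh_coeff :: "nat \<Rightarrow> (nat \<Rightarrow> nat) \<Rightarrow> real" where
  "cosh_coeff m q = (if even (total_size m q) then 1 else 0)"

lemma has_sum_cosh_coeff:
  "((\<lambda>q. cosh_coeff m q * divided_power m x q) has_sum cosh (\<Sum>i<m. x i)) (multi_indices m)"
  "(\<lambda>q. norm (cosh_coeff m q * divided_power m x q)) summable_on multi_indices m"
proof -
  have "(\<lambda>q. cosh_coeff m q * divided_power m x q)
      = (\<lambda>q. (divided_power m x q + divided_power m (\<lambda>i. - x i) q) / 2)"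
    by (simp add: fun_eq_iff divided_power_uminus cosh_coeff_def)
  moreover have "((\<lambda>q. (divided_power m x q + divided_power m (\<lambda>i. - x i) q) / 2)
      has_sum (exp (\<Sum>i<m. x i) + exp (\<Sum>i<m. - x i)) / 2) (multi_indices m)"
    by (intro has_sum_divide_const has_sum_add has_sum_divided_power)
  ultimately show "((\<lambda>q. cosh_coeff m q * divided_power m x q) has_sum cosh (\<Sum>i<m. x i))
      (multi_indices m)"
    by (simp add: cosh_def sum_negf)
  show "(\<lambda>q. norm (cosh_coeff m q * divided_power m x q)) summable_on multi_indices m"
    by (rule summable_on_comparison_test[OF has_sum_divided_power(2)[of m x]])
      (simp_all add: cosh_coeff_def)
qed

lemma summable_on_norm_sa_multipartite:
  assumes "m \<ge> 1" "\<And>i. i < m \<Longrightarrow> \<bar>x i\<bar> < 1 / (2 * real m)"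
  shows "(\<lambda>p. norm (real_of_int (sa_multipartite m p) * divided_power m x p))
    summable_on multi_indices m"
proof (rule summable_on_comparison_test)
  let ?c = "2 * real m"
  have "(\<lambda>k. norm (\<bar>?c * x i\<bar> ^ k)) summable_on UNIV" if "i < m" for i
    using has_sum_geometric[of "\<bar>?c * x i\<bar>"] assms that
    by (simp add: has_sum_imp_summable abs_mult field_simps)
  then show "(\<lambda>p. \<Prod>i<m. \<bar>?c * x i\<bar> ^ p i) summable_on multi_indices m"
    using has_sum_prod_multi_indices(2)[of m "\<lambda>i k. \<bar>?c * x i\<bar> ^ k"]
    by (simp add: abs_prod)
  fix p assume p: "p \<in> multi_indices m"
  have "norm (real_of_int (sa_multipartite m p) * divided_power m x p)
      \<le> (?c ^ total_size m p * fact_vec m p) * ((\<Prod>i<m. \<bar>x i\<bar> ^ p i) / fact_vec m p)"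
    unfolding real_norm_def abs_mult abs_divided_power
    by (intro mult_right_mono abs_sa_multipartite_le assms(1) p)
      (simp add: prod_nonneg fact_vec_pos less_imp_le)
  also have "\<dots> = (\<Prod>i<m. \<bar>?c * x i\<bar> ^ p i)"
    using fact_vec_pos[of m p]
    by (simp add: total_size_def power_sum abs_mult power_mult_distrib prod.distrib)
  finally show "norm (real_of_int (sa_multipartite m p) * divided_power m x p)
      \<le> (\<Prod>i<m. \<bar>?c * x i\<bar> ^ p i)" .
qed simp

section \<open>The Cauchy product\<close>

lemma has_sum_sum:
  fixes f :: "'i \<Rightarrow> 'a \<Rightarrow> 'b::topological_comm_monoid_add"
  assumes "finite I" "\<And>i. i \<in> I \<Longrightarrow> (f i has_sum s i) A"
  shows "((\<lambda>x. \<Sum>i\<in>I. f i x) has_sum (\<Sum>i\<in>I. s i)) A"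
  using assms by (induction I rule: finite_induct) (simp_all add: has_sum_add)

lemma bij_betw_convolution:
  "bij_betw (\<lambda>(r, p). (p, r - p)) (Sigma (multi_indices m) atMost) (multi_indices m \<times> multi_indices m)"
proof (rule bij_betw_byWitness[where f'="\<lambda>(p, q). (p + q, p)"])
  have "p \<in> multi_indices m" "r - p \<in> multi_indices m" if "r \<in> multi_indices m" "p \<le> r" for r p
    using that atMost_subset_multi_indices[OF that(1)] by (auto simp: multi_indices_def)
  then show "(\<lambda>(r, p). (p, r - p)) ` Sigma (multi_indices m) atMost \<subseteq> multi_indices m \<times> multi_indices m"
    by auto
  have "p + q \<in> multi_indices m" "p \<le> p + q" if "p \<in> multi_indices m" "q \<in> multi_indices m" for p q
    using that by (simp_all add: multi_indices_def le_fun_def)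
  then show "(\<lambda>(p, q). (p + q, p)) ` (multi_indices m \<times> multi_indices m) \<subseteq> Sigma (multi_indices m) atMost"
    by auto
  have "p + (r - p) = r" if "p \<le> r" for p r :: "nat \<Rightarrow> nat"
    using that by (simp add: le_fun_def fun_eq_iff)
  then show "\<forall>z\<in>Sigma (multi_indices m) atMost. (\<lambda>(p, q). (p + q, p)) ((\<lambda>(r, p). (p, r - p)) z) = z"
    by auto
  show "\<forall>z\<in>multi_indices m \<times> multi_indices m. (\<lambda>(r, p). (p, r - p)) ((\<lambda>(p, q). (p + q, p)) z) = z"
    by (simp add: fun_eq_iff)
qed

lemma has_sum_cauchy_product:
  fixes f g :: "(nat \<Rightarrow> nat) \<Rightarrow> real"
  assumes f: "(\<lambda>p. norm (f p)) summable_on multi_indices m"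
    and g: "(\<lambda>q. norm (g q)) summable_on multi_indices m"
  shows "((\<lambda>r. \<Sum>p\<le>r. f p * g (r - p)) has_sum infsum f (multi_indices m) * infsum g (multi_indices m))
    (multi_indices m)"
proof -
  let ?I = "multi_indices m"
  define F where "F z = f (fst z) * g (snd z)" for z
  have fsum: "f summable_on ?I" using f by (rule summable_on_iff_abs_summable_on_real[THEN iffD2])
  have gsum: "g summable_on ?I" using g by (rule summable_on_iff_abs_summable_on_real[THEN iffD2])
  have "(\<lambda>z. norm (F z)) summable_on Sigma ?I (\<lambda>_. ?I)"
  proof (rule Infinite_Sum.abs_summable_on_Sigma_iff[THEN iffD2], intro conjI ballI)
    fix p
    show "(\<lambda>q. norm (F (p, q))) summable_on ?I"
      using summable_on_cmult_right[OF g, of "norm (f p)"] by (simp add: F_def abs_mult)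
  next
    have "infsum (\<lambda>q. norm (F (p, q))) ?I = norm (f p) * infsum (\<lambda>q. norm (g q)) ?I" for p
      by (simp add: F_def abs_mult infsum_cmult_right')
    moreover have "0 \<le> infsum (\<lambda>q. norm (g q)) ?I" by (simp add: infsum_nonneg)
    ultimately show "(\<lambda>p. norm (infsum (\<lambda>q. norm (F (p, q))) ?I)) summable_on ?I"
      using summable_on_cmult_left[OF f] by simp
  qed
  then have "F summable_on ?I \<times> ?I"
    by (rule summable_on_iff_abs_summable_on_real[THEN iffD2])
  moreover have "((\<lambda>q. F (p, q)) has_sum f p * infsum g ?I) ?I" for p
    using has_sum_cmult_right[OF has_sum_infsum[OF gsum], of "f p"] by (simp add: F_def)
  moreover have "((\<lambda>p. f p * infsum g ?I) has_sum infsum f ?I * infsum g ?I) ?I"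
    by (rule has_sum_cmult_left[OF has_sum_infsum[OF fsum]])
  ultimately have "(F has_sum infsum f ?I * infsum g ?I) (?I \<times> ?I)"
    by (intro has_sum_SigmaI)
  then have "((\<lambda>(r, p). F (p, r - p)) has_sum infsum f ?I * infsum g ?I) (Sigma ?I atMost)"
    by (simp add: has_sum_reindex_bij_betw[OF bij_betw_convolution, symmetric] case_prod_unfold)
  then show ?thesis
  proof (rule has_sum_Sigma')
    fix r assume "r \<in> ?I"
    then show "((\<lambda>p. (\<lambda>(r, p). F (p, r - p)) (r, p)) has_sum (\<Sum>p\<le>r. f p * g (r - p))) {..r}"
      by (intro has_sum_finiteI) (simp_all add: F_def finite_atMost_multi_indices)
  qed
qed

section \<open>Coefficients of the product\<close>

text \<open>Coefficient of \<open>x\<^sup>r / r!\<close> in \<open>1 - m + cosh x\<^sub>0 + \<dots> + cosh x\<^sub>m\<^sub>-\<^sub>1\<close>.\<close>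
definition numerator_coeff :: "nat \<Rightarrow> (nat \<Rightarrow> nat) \<Rightarrow> real" where
  "numerator_coeff m r = (if has_two_parts m r \<or> odd (total_size m r) then 0 else 1)"

lemma sum_sa_multipartite_cosh_coeff:
  assumes r: "r \<in> multi_indices m"
  shows "(\<Sum>p\<le>r. real (binomial_vec m r p) * real_of_int (sa_multipartite m p) * cosh_coeff m (r - p))
    = numerator_coeff m r"
proof -
  have "cosh_coeff m (r - p) = cosh_coeff m r" if "p \<le> r" "sa_multipartite m p \<noteq> 0" for p
  proof -
    have "even (total_size m p)" using sa_multipartite_odd that(2) by blast
    then show ?thesis
      using total_size_mono[OF that(1), of m] by (simp add: cosh_coeff_def total_size_diff[OF that(1)])
  qed
  then have "(\<Sum>p\<le>r. real (binomial_vec m r p) * real_of_int (sa_multipartite m p) * cosh_coeff m (r - p))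
      = cosh_coeff m r * real_of_int (\<Sum>p\<le>r. of_nat (binomial_vec m r p) * sa_multipartite m p)"
    by (simp add: sum_distrib_left) (intro sum.cong; force)
  also have "\<dots> = numerator_coeff m r"
    using sum_sa_multipartite_two_parts[OF r] sum_sa_multipartite_one_part[OF r]
    by (simp add: cosh_coeff_def numerator_coeff_def del: of_int_sum)
  finally show ?thesis .
qed

lemma convolution_sa_multipartite_cosh_coeff:
  assumes "r \<in> multi_indices m"
  shows "(\<Sum>p\<le>r. real_of_int (sa_multipartite m p) * divided_power m x p
      * (cosh_coeff m (r - p) * divided_power m x (r - p)))
    = numerator_coeff m r * divided_power m x r"
proof -
  have "(\<Sum>p\<le>r. real_of_int (sa_multipartite m p) * divided_power m x p
      * (cosh_coeff m (r - p) * divided_power m x (r - p)))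
    = (\<Sum>p\<le>r. real (binomial_vec m r p) * real_of_int (sa_multipartite m p) * cosh_coeff m (r - p)
        * divided_power m x r)"
  proof (rule sum.cong)
    fix p assume "p \<in> {..r}"
    then have "divided_power m x p * divided_power m x (r - p)
        = real (binomial_vec m r p) * divided_power m x r"
      by (simp add: divided_power_mult)
    then show "real_of_int (sa_multipartite m p) * divided_power m x p
        * (cosh_coeff m (r - p) * divided_power m x (r - p))
      = real (binomial_vec m r p) * real_of_int (sa_multipartite m p) * cosh_coeff m (r - p)
        * divided_power m x r"
      by (metis (no_types, lifting) mult.assoc mult.left_commute)
  qed simp
  also have "\<dots> = numerator_coeff m r * divided_power m x r"
    by (simp add: sum_distrib_right[symmetric] sum_sa_multipartite_cosh_coeff[OF assms])
  finally show ?thesis .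
qed

lemma not_has_two_parts_fun_upd: "\<not> has_two_parts m (0(i := k))"
  by (auto simp: has_two_parts_def)

lemma eq_fun_upd_if_not_has_two_parts:
  assumes "r \<in> multi_indices m" "\<not> has_two_parts m r" "r i \<noteq> 0"
  shows "r = 0(i := r i)"
proof
  fix j
  show "r j = (0(i := r i)) j"
  proof (cases "j = i \<or> m \<le> j")
    case False
    have "i < m" using assms(1,3) by (auto simp: multi_indices_def not_less[symmetric])
    moreover have "j < m" using False by simp
    ultimately show ?thesis
      using False assms(2,3) unfolding has_two_parts_def by (metis fun_upd_other neq0_conv zero_fun_apply)
  qed (use assms(1) in \<open>auto simp: multi_indices_def\<close>)
qed

lemma divided_power_fun_upd: "i < m \<Longrightarrow> divided_power m x (0(i := k)) = x i ^ k / fact k"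
  by (simp add: divided_power_def prod.If_cases if_distrib lessThan_def)

lemma has_sum_divided_power_axis:
  assumes "i < m"
  shows "((\<lambda>r. if r \<in> (\<lambda>k. 0(i := k)) ` {k. even k} then divided_power m x r else 0)
    has_sum cosh (x i)) (multi_indices m)"
proof -
  let ?e = "\<lambda>k. (0 :: nat \<Rightarrow> nat)(i := k)"
  let ?h = "\<lambda>r. if r \<in> ?e ` {k. even k} then divided_power m x r else 0"
  have inj: "inj ?e" by (rule injI) (metis fun_upd_same)
  then have "?h \<circ> ?e = (\<lambda>k. if even k then x i ^ k / fact k else 0)"
    using assms by (auto simp: fun_eq_iff inj_image_mem_iff divided_power_fun_upd)
  then have "((?h \<circ> ?e) has_sum cosh (x i)) UNIV" by (simp add: has_sum_cosh)
  then have "(?h has_sum cosh (x i)) (range ?e)"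
    using inj by (simp add: has_sum_reindex)
  moreover have "range ?e \<subseteq> multi_indices m" using assms by (auto simp: multi_indices_def)
  ultimately show ?thesis
    by (subst has_sum_cong_neutral[where T="range ?e" and g="?h"]) auto
qed

lemma numerator_coeff_divided_power:
  assumes r: "r \<in> multi_indices m"
  shows "numerator_coeff m r * divided_power m x r
    = (if r = 0 then 1 - real m else 0)
      + (\<Sum>i<m. if r \<in> (\<lambda>k. 0(i := k)) ` {k. even k} then divided_power m x r else 0)"
proof (cases "r = 0")
  case True
  have "(0 :: nat \<Rightarrow> nat) \<in> (\<lambda>k. 0(i := k)) ` {k. even k}" for i
    by (rule image_eqI[of _ _ 0]) auto
  then show ?thesis
    using True by (simp add: numerator_coeff_def has_two_parts_def total_size_def divided_power_zero)
next
  case False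
  then obtain i where i: "r i \<noteq> 0" by (auto simp: fun_eq_iff)
  show ?thesis
  proof (cases "has_two_parts m r")
    case True
    then have "r \<notin> (\<lambda>k. 0(i := k)) ` {k. even k}" for i by (auto simp: not_has_two_parts_fun_upd)
    with True False show ?thesis by (simp add: numerator_coeff_def)
  next
    case one_part: False
    have r_eq: "r = 0(i := r i)" by (rule eq_fun_upd_if_not_has_two_parts[OF r one_part i])
    have "i < m" using r i by (auto simp: multi_indices_def not_less[symmetric])
    have axis: "r \<in> (\<lambda>k. 0(j := k)) ` {k. even k} \<longleftrightarrow> j = i \<and> even (r i)" for j
    proof
      assume "r \<in> (\<lambda>k. 0(j := k)) ` {k. even k}"
      then obtain k where "even k" "r = 0(j := k)" by auto
      with i show "j = i \<and> even (r i)" by (cases "j = i") auto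
    qed (subst r_eq, auto)
    have "total_size m r = r i"
      using \<open>i < m\<close> by (subst r_eq) (simp add: total_size_def func_zero)
    then show ?thesis
      using False one_part \<open>i < m\<close> by (simp add: axis numerator_coeff_def if_distrib sum.delta)
  qed
qed

lemma has_sum_numerator_coeff:
  "((\<lambda>r. numerator_coeff m r * divided_power m x r) has_sum (1 - real m + (\<Sum>i<m. cosh (x i))))
    (multi_indices m)"
proof -
  have "((\<lambda>r. if r = 0 then 1 - real m else 0) has_sum (1 - real m)) (multi_indices m)"
    by (rule has_sum_finite_neutralI[where B="{0}"]) (auto simp: multi_indices_def)
  moreover have "((\<lambda>r. \<Sum>i<m. if r \<in> (\<lambda>k. 0(i := k)) ` {k. even k} then divided_power m x r else 0)
      has_sum (\<Sum>i<m. cosh (x i))) (multi_indices m)"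
    by (intro has_sum_sum has_sum_divided_power_axis) auto
  ultimately show ?thesis
    by (subst has_sum_cong[OF numerator_coeff_divided_power]) (auto intro: has_sum_add)
qed

lemma has_sum_sa_multipartite:
  assumes "m \<ge> 1" "\<And>i. i < m \<Longrightarrow> \<bar>x i\<bar> < 1 / (2 * real m)"
  shows "((\<lambda>p. real_of_int (sa_multipartite m p) * divided_power m x p)
    has_sum (1 - real m + (\<Sum>i<m. cosh (x i))) / cosh (\<Sum>i<m. x i)) (multi_indices m)"
proof -
  have summable: "(\<lambda>p. norm (real_of_int (sa_multipartite m p) * divided_power m x p))
      summable_on multi_indices m"
    using assms by (rule summable_on_norm_sa_multipartite)
  define A where "A = infsum (\<lambda>p. real_of_int (sa_multipartite m p) * divided_power m x p) (multi_indices m)"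
  have "((\<lambda>r. \<Sum>p\<le>r. real_of_int (sa_multipartite m p) * divided_power m x p
      * (cosh_coeff m (r - p) * divided_power m x (r - p))) has_sum A * cosh (\<Sum>i<m. x i))
      (multi_indices m)"
    using has_sum_cauchy_product[OF summable has_sum_cosh_coeff(2)[of m x]]
    unfolding A_def infsumI[OF has_sum_cosh_coeff(1)] .
  then have "((\<lambda>r. numerator_coeff m r * divided_power m x r) has_sum A * cosh (\<Sum>i<m. x i))
      (multi_indices m)"
    by (subst (asm) has_sum_cong[OF convolution_sa_multipartite_cosh_coeff])
  then have "A * cosh (\<Sum>i<m. x i) = 1 - real m + (\<Sum>i<m. cosh (x i))"
    using has_sum_numerator_coeff by (rule has_sum_unique)
  then have "A = (1 - real m + (\<Sum>i<m. cosh (x i))) / cosh (\<Sum>i<m. x i)"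
    using cosh_real_pos[of "\<Sum>i<m. x i"] by (simp add: eq_divide_eq)
  moreover have "((\<lambda>p. real_of_int (sa_multipartite m p) * divided_power m x p) has_sum A)
      (multi_indices m)"
    using summable_on_iff_abs_summable_on_real[THEN iffD2, OF summable] unfolding A_def
    by (rule has_sum_infsum)
  ultimately show ?thesis by simp
qed

theorem mainTheorem7:
  fixes m :: nat
  assumes "m \<ge> 1"
  shows "\<exists>\<epsilon>>0. \<forall>x :: nat \<Rightarrow> real. (\<forall>i<m. \<bar>x i\<bar> < \<epsilon>) \<longrightarrow>
           ((\<lambda>p. real_of_int (sa multipartite_adj (multipartite_verts m p)) *
                  (\<Prod>i<m. x i ^ p i / fact (p i)))
            has_sum ((1 - real m + (\<Sum>i<m. cosh (x i))) / cosh (\<Sum>i<m. x i)))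
           {p :: nat \<Rightarrow> nat. \<forall>i\<ge>m. p i = 0}"
  using has_sum_sa_multipartite[OF assms] assms
  by (intro exI[of _ "1 / (2 * real m)"])
    (simp add: sa_multipartite_def divided_power_def multi_indices_def)

end
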